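(* Let $\rho_n$ ($n\ge0$) be constants, and for each pair $s,\delta>0$ with $1/s$ an integer and $\delta<s/2$ let $A=A_{s,\delta}$ be a $C^\infty$ diffeomorphism of $[0,1]$ such that: $A=\mathrm{Id}+a$ with $a$ a non-negative $C^\infty$ function of period $s$; $A(0)=0$, $A(\delta)=s-\delta$, $A(s)=s$; $\delta/(2s)\le A'\le 2s/\delta$; and $\|A\|_n\le\rho_n/\delta^{n^2}$ for every $n\ge0$. Then for any $n\ge0$ and any $C^n$ diffeomorphism $h$ of $[0,1]$ (equivalently of the circle $\mathbb R/\mathbb Z\cong[0,1]$) there is a constant $\tilde c(h,n)$, depending on $h$ and $n$ but not on $\delta$ and $s$, such that $$\|A_{s,\delta}\circ h\|_n\le \tilde c(h,n)/\delta^{n^2}$$ for all such $s,\delta$.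
   Context: For a $C^n$ diffeomorphism $g$ of $[0,1]$, $\|g\|_n^*=\max|g^{(i)}(x)|$, the maximum over all $x\in[0,1]$ and $0\le i\le n$, and $\|g\|_n=\max\{\|g\|_n^*,\|g^{-1}\|_n^*\}$. *)

theory Defs
  imports "HOL-Analysis.Analysis"
begin

definition hder01 :: "nat \<Rightarrow> (real \<Rightarrow> real) \<Rightarrow> real \<Rightarrow> real" where
  "hder01 i g = ((\<lambda>f x. vector_derivative f (at x within {0..1})) ^^ i) g"

definition Cn01 :: "nat \<Rightarrow> (real \<Rightarrow> real) \<Rightarrow> bool" where
  "Cn01 n g \<longleftrightarrow>
     (\<forall>i<n. \<forall>x\<in>{0..1}. hder01 i g differentiable (at x within {0..1})) \<and>
     (\<forall>i\<le>n. continuous_on {0..1} (hder01 i g))"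

definition diffeo01 :: "nat \<Rightarrow> (real \<Rightarrow> real) \<Rightarrow> bool" where
  "diffeo01 n g \<longleftrightarrow> bij_betw g {0..1} {0..1} \<and> Cn01 n g \<and> Cn01 n (inv_into {0..1} g)"

definition smooth_diffeo01 :: "(real \<Rightarrow> real) \<Rightarrow> bool" where
  "smooth_diffeo01 g \<longleftrightarrow> (\<forall>n. diffeo01 n g)"

definition norm_star :: "nat \<Rightarrow> (real \<Rightarrow> real) \<Rightarrow> real" where
  "norm_star n g = Sup {\<bar>hder01 i g x\<bar> | i x. i \<le> n \<and> x \<in> {0..1}}"

definition dnorm :: "nat \<Rightarrow> (real \<Rightarrow> real) \<Rightarrow> real" where
  "dnorm n g = max (norm_star n g) (norm_star n (inv_into {0..1} g))"

definition smooth_real :: "(real \<Rightarrow> real) \<Rightarrow> bool" where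
  "smooth_real a \<longleftrightarrow> (\<forall>k x. (deriv ^^ k) a differentiable (at x))"

definition admissible :: "real \<Rightarrow> real \<Rightarrow> bool" where
  "admissible s \<delta> \<longleftrightarrow> s > 0 \<and> \<delta> > 0 \<and> (\<exists>k::nat. k > 0 \<and> s = 1 / real k) \<and> \<delta> < s / 2"

end

theory Submission
  imports Defs
begin

text \<open>By Faa di Bruno's formula, the i-th derivative of f o g is a sum, with coefficients
  depending only on i, of products f^(j)(g x) * g^(k_1)(x) * ... * g^(k_j)(x) with all k_l > 0
  and k_1 + ... + k_j = i. For A o h every factor except A^(j)(h x) is bounded independently
  of s and delta, while |A^(j)| <= rho_n / delta^(n^2). For the inverse h^-1 o A^-1 each factor
  (A^-1)^(k) is at most R / delta^(k^2), and k_1^2 + ... + k_j^2 <= (k_1 + ... + k_j)^2 <= n^2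
  bounds the whole product by R^n / delta^(n^2).\<close>

type_synonym fdb_term = "real \<times> nat \<times> nat list"

text \<open>A term (c, j, ks) stands for c * f^(j)(g x) * prod [g^(k)(x). k <- ks]; the list
  fdb_terms i is the Faa di Bruno expansion of (f o g)^(i), with repetitions.\<close>

fun fdb_step :: "fdb_term \<Rightarrow> fdb_term list" where
  "fdb_step (c, j, ks) =
     (c, Suc j, 1 # ks) # map (\<lambda>m. (c, j, ks[m := Suc (ks ! m)])) [0..<length ks]"

fun fdb_terms :: "nat \<Rightarrow> fdb_term list" where
  "fdb_terms 0 = [(1, 0, [])]"
| "fdb_terms (Suc i) = concat (map fdb_step (fdb_terms i))"

definition fdb_eval :: "(real \<Rightarrow> real) \<Rightarrow> (real \<Rightarrow> real) \<Rightarrow> real \<Rightarrow> fdb_term \<Rightarrow> real" where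
  "fdb_eval f g x t =
     (case t of (c, j, ks) \<Rightarrow> c * hder01 j f (g x) * prod_list (map (\<lambda>k. hder01 k g x) ks))"

lemma sum_list_update_Suc:
  "m < length ks \<Longrightarrow> sum_list (ks[m := Suc (ks ! m)]) = Suc (sum_list ks)"
  by (induction ks arbitrary: m) (auto split: nat.split)

lemma length_le_sum_list: "\<forall>k\<in>set ks. (0::nat) < k \<Longrightarrow> length ks \<le> sum_list ks"
  by (induction ks) auto

lemma sum_list_squares_le: "(\<Sum>k\<leftarrow>ks. k\<^sup>2) \<le> (sum_list ks :: nat)\<^sup>2"
  by (induction ks) (auto simp: power2_sum)

lemma sum_list_concat: "sum_list (concat xss) = sum_list (map sum_list xss)"
  by (induction xss) simp_all

lemma fdb_terms_shape:
  "(c, j, ks) \<in> set (fdb_terms i) \<Longrightarrow> length ks = j \<and> sum_list ks = i \<and> (\<forall>k\<in>set ks. 0 < k)"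
proof (induction i arbitrary: c j ks)
  case 0
  then show ?case by simp
next
  case (Suc i)
  then obtain c' j' ks' where t': "(c', j', ks') \<in> set (fdb_terms i)"
    and step: "(c, j, ks) \<in> set (fdb_step (c', j', ks'))"
    by auto
  have IH: "length ks' = j' \<and> sum_list ks' = i \<and> (\<forall>k\<in>set ks'. 0 < k)"
    using Suc.IH t' by blast
  from step consider "(c, j, ks) = (c', Suc j', 1 # ks')"
    | m where "m < length ks'" "(c, j, ks) = (c', j', ks'[m := Suc (ks' ! m)])"
    by auto
  then show ?case
  proof cases
    case 1
    then show ?thesis using IH by auto
  next
    case (2 m)
    have "set ks \<subseteq> insert (Suc (ks' ! m)) (set ks')"
      using 2 set_update_subset_insert by fastforce
    then show ?thesis using IH 2 sum_list_update_Suc by auto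
  qed
qed

lemma hder01_0 [simp]: "hder01 0 g = g"
  by (simp add: hder01_def)

lemma hder01_Suc: "hder01 (Suc i) g x = vector_derivative (hder01 i g) (at x within {0..1})"
  by (simp add: hder01_def)

lemma Cn01_has_derivative:
  assumes "Cn01 n g" "i < n" "x \<in> {0..1}"
  shows "(hder01 i g has_field_derivative hder01 (Suc i) g x) (at x within {0..1})"
proof -
  have "hder01 i g differentiable (at x within {0..1})"
    using assms unfolding Cn01_def by blast
  then show ?thesis
    by (simp add: hder01_Suc has_real_derivative_iff_has_vector_derivative vector_derivative_works)
qed

lemma hder01_SucI:
  assumes "\<forall>y\<in>{0..1}. hder01 i F y = P y" "(P has_field_derivative D) (at x within {0..1})"
    and "x \<in> {0..1}"
  shows "hder01 (Suc i) F x = D"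
proof -
  have "(hder01 i F has_field_derivative D) (at x within {0..1})"
    using has_field_derivative_transform_within[OF assms(2) zero_less_one assms(3)] assms(1) by auto
  then have "(hder01 i F has_vector_derivative D) (at x within cbox 0 1)"
    by (simp add: has_real_derivative_iff_has_vector_derivative)
  then have "vector_derivative (hder01 i F) (at x within cbox 0 1) = D"
    by (rule vector_derivative_within_cbox[rotated 2]) (use assms(3) in auto)
  then show ?thesis by (simp add: hder01_Suc)
qed

lemma has_field_derivative_prod_list:
  assumes "\<And>k. k \<in> set ks \<Longrightarrow> (G k has_field_derivative G (Suc k) x) (at x within S)"
  shows "((\<lambda>y. \<Prod>k\<leftarrow>ks. G k y) has_field_derivative
           (\<Sum>m\<leftarrow>[0..<length ks]. \<Prod>k\<leftarrow>ks[m := Suc (ks ! m)]. G k x)) (at x within S)"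
  using assms
proof (induction ks)
  case Nil
  then show ?case by simp
next
  case (Cons a ks)
  have "[0..<length (a # ks)] = 0 # map Suc [0..<length ks]"
    by (simp add: map_Suc_upt upt_conv_Cons del: upt_Suc)
  moreover have "((\<lambda>y. G a y * (\<Prod>k\<leftarrow>ks. G k y)) has_field_derivative
      G (Suc a) x * (\<Prod>k\<leftarrow>ks. G k x) +
      (\<Sum>m\<leftarrow>[0..<length ks]. \<Prod>k\<leftarrow>ks[m := Suc (ks ! m)]. G k x) * G a x) (at x within S)"
    using Cons by (intro DERIV_mult) auto
  ultimately show ?case
    by (simp add: o_def sum_list_const_mult[symmetric] algebra_simps)
qed

lemma has_field_derivative_sum_list:
  assumes "\<And>t. t \<in> set ts \<Longrightarrow> (E t has_field_derivative D t) (at x within S)"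
  shows "((\<lambda>y. \<Sum>t\<leftarrow>ts. E t y) has_field_derivative sum_list (map D ts)) (at x within S)"
  using assms by (induction ts) (auto intro!: DERIV_add)

lemma has_field_derivative_fdb_eval:
  assumes f: "Cn01 n f" and g: "Cn01 n g" and g_into: "g ` {0..1} \<subseteq> {0..1}"
    and t: "t \<in> set (fdb_terms i)" and i: "i < n" and x: "x \<in> {0..1}"
  shows "((\<lambda>y. fdb_eval f g y t) has_field_derivative sum_list (map (fdb_eval f g x) (fdb_step t)))
           (at x within {0..1})"
proof -
  obtain c j ks where t_eq: "t = (c, j, ks)" by (cases t)
  have shape: "length ks = j" "sum_list ks = i" "\<forall>k\<in>set ks. 0 < k"
    using fdb_terms_shape t t_eq by blast+
  have "j < n" using shape length_le_sum_list i by (metis le_less_trans)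
  then have "(hder01 j f has_field_derivative hder01 (Suc j) f (g x)) (at (g x) within g ` {0..1})"
    using DERIV_subset[OF Cn01_has_derivative[OF f] g_into] g_into x by blast
  moreover have "(g has_field_derivative hder01 1 g x) (at x within {0..1})"
    using Cn01_has_derivative[OF g, of 0 x] i x by simp
  ultimately have Df: "((\<lambda>y. hder01 j f (g y)) has_field_derivative hder01 (Suc j) f (g x) * hder01 1 g x)
              (at x within {0..1})"
    using DERIV_image_chain by (fastforce simp: o_def)
  have "k < n" if "k \<in> set ks" for k
    using member_le_sum_list[OF that] shape(2) i by linarith
  then have Dp: "((\<lambda>y. \<Prod>k\<leftarrow>ks. hder01 k g y) has_field_derivative
      (\<Sum>m\<leftarrow>[0..<length ks]. \<Prod>k\<leftarrow>ks[m := Suc (ks ! m)]. hder01 k g x)) (at x within {0..1})"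
    by (intro has_field_derivative_prod_list Cn01_has_derivative[OF g _ x])
  show ?thesis
    using DERIV_mult[OF DERIV_cmult[OF Df] Dp]
    by (simp add: t_eq fdb_eval_def o_def sum_list_const_mult algebra_simps)
qed

theorem hder01_comp_fdb:
  assumes f: "Cn01 n f" and g: "Cn01 n g" and g_into: "g ` {0..1} \<subseteq> {0..1}"
    and F: "\<forall>x\<in>{0..1}. F x = f (g x)"
  shows "i \<le> n \<Longrightarrow> x \<in> {0..1} \<Longrightarrow> hder01 i F x = (\<Sum>t\<leftarrow>fdb_terms i. fdb_eval f g x t)"
proof (induction i arbitrary: x)
  case 0
  then show ?case using F by (simp add: fdb_eval_def)
next
  case (Suc i)
  have IH: "\<forall>y\<in>{0..1}. hder01 i F y = (\<Sum>t\<leftarrow>fdb_terms i. fdb_eval f g y t)"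
    using Suc by simp
  have "((\<lambda>y. \<Sum>t\<leftarrow>fdb_terms i. fdb_eval f g y t) has_field_derivative
          (\<Sum>t\<leftarrow>fdb_terms i. sum_list (map (fdb_eval f g x) (fdb_step t)))) (at x within {0..1})"
    using Suc.prems
    by (intro has_field_derivative_sum_list has_field_derivative_fdb_eval[OF f g g_into]) auto
  then have "hder01 (Suc i) F x = (\<Sum>t\<leftarrow>fdb_terms i. sum_list (map (fdb_eval f g x) (fdb_step t)))"
    by (rule hder01_SucI[OF IH _ Suc.prems(2)])
  also have "\<dots> = (\<Sum>t\<leftarrow>fdb_terms (Suc i). fdb_eval f g x t)"
    by (simp add: map_concat sum_list_concat o_def)
  finally show ?case .
qed

lemma Cn01_bounded:
  assumes "Cn01 n g"
  obtains B where "\<And>i x. i \<le> n \<Longrightarrow> x \<in> {0..1} \<Longrightarrow> \<bar>hder01 i g x\<bar> \<le> B"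
proof -
  have "compact (\<Union>i\<le>n. hder01 i g ` {0..1})"
    using assms unfolding Cn01_def by (intro compact_UN compact_continuous_image) auto
  then obtain B where B: "\<forall>y\<in>(\<Union>i\<le>n. hder01 i g ` {0..1}). \<bar>y\<bar> \<le> B"
    using compact_imp_bounded bounded_real by blast
  show ?thesis
  proof (rule that)
    fix i and x :: real assume "i \<le> n" "x \<in> {0..1}"
    then have "hder01 i g x \<in> (\<Union>i\<le>n. hder01 i g ` {0..1})" by blast
    then show "\<bar>hder01 i g x\<bar> \<le> B" using B by blast
  qed
qed

lemma hder01_le_norm_star:
  assumes "Cn01 n g" "i \<le> n" "x \<in> {0..1}"
  shows "\<bar>hder01 i g x\<bar> \<le> norm_star n g"
proof -
  obtain B where "\<And>i x. i \<le> n \<Longrightarrow> x \<in> {0..1} \<Longrightarrow> \<bar>hder01 i g x\<bar> \<le> B"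
    using Cn01_bounded[OF assms(1)] by blast
  then have "bdd_above {\<bar>hder01 i g x\<bar> | i x. i \<le> n \<and> x \<in> {0..1}}"
    by (auto simp: bdd_above_def)
  then show ?thesis
    unfolding norm_star_def using assms by (blast intro: cSup_upper)
qed

lemma norm_star_le:
  assumes "\<And>i x. i \<le> n \<Longrightarrow> x \<in> {0..1} \<Longrightarrow> \<bar>hder01 i g x\<bar> \<le> C"
  shows "norm_star n g \<le> C"
  unfolding norm_star_def using assms by (intro cSup_least) force+

lemma hder01_le_dnorm:
  assumes "diffeo01 n g" "i \<le> n" "x \<in> {0..1}"
  shows "\<bar>hder01 i g x\<bar> \<le> dnorm n g" "\<bar>hder01 i (inv_into {0..1} g) x\<bar> \<le> dnorm n g"
proof -
  have "Cn01 n g" "Cn01 n (inv_into {0..1} g)"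
    using assms(1) unfolding diffeo01_def by blast+
  then show "\<bar>hder01 i g x\<bar> \<le> dnorm n g" "\<bar>hder01 i (inv_into {0..1} g) x\<bar> \<le> dnorm n g"
    using hder01_le_norm_star assms(2,3) unfolding dnorm_def by fastforce+
qed

lemma abs_prod_list_le:
  fixes G B :: "'a \<Rightarrow> real"
  assumes "\<And>k. k \<in> set ks \<Longrightarrow> \<bar>G k\<bar> \<le> B k"
  shows "\<bar>\<Prod>k\<leftarrow>ks. G k\<bar> \<le> (\<Prod>k\<leftarrow>ks. B k)"
  using assms by (induction ks) (auto simp: abs_mult intro!: mult_mono order_trans[OF abs_ge_zero])

lemma fdb_eval_bound:
  assumes t: "t \<in> set (fdb_terms i)" and i: "i \<le> n"
    and f_bound: "\<And>j. j \<le> n \<Longrightarrow> \<bar>hder01 j f (g x)\<bar> \<le> M"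
    and g_bound: "\<And>k. k \<le> n \<Longrightarrow> \<bar>hder01 k g x\<bar> \<le> R * E ^ k\<^sup>2"
    and R: "1 \<le> R" and E: "1 \<le> E"
  shows "\<bar>fdb_eval f g x t\<bar> \<le> \<bar>fst t\<bar> * (M * (R ^ n * E ^ n\<^sup>2))"
proof -
  obtain c j ks where t_eq: "t = (c, j, ks)" by (cases t)
  have shape: "length ks = j" "sum_list ks = i" "\<forall>k\<in>set ks. 0 < k"
    using fdb_terms_shape t t_eq by blast+
  have j: "j \<le> n" using length_le_sum_list[OF shape(3)] shape(1,2) i by linarith
  have "k \<le> n" if "k \<in> set ks" for k using member_le_sum_list[OF that] shape(2) i by linarith
  then have "\<bar>\<Prod>k\<leftarrow>ks. hder01 k g x\<bar> \<le> (\<Prod>k\<leftarrow>ks. R * E ^ k\<^sup>2)"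
    using g_bound by (intro abs_prod_list_le) blast
  also have "\<dots> = R ^ j * E ^ (\<Sum>k\<leftarrow>ks. k\<^sup>2)"
    unfolding shape(1)[symmetric] by (induction ks) (simp_all add: power_add)
  also have "\<dots> \<le> R ^ n * E ^ n\<^sup>2"
  proof (intro mult_mono power_increasing)
    have "(\<Sum>k\<leftarrow>ks. k\<^sup>2) \<le> i\<^sup>2" using sum_list_squares_le shape(2) by metis
    also have "\<dots> \<le> n\<^sup>2" using i by (rule power_mono) simp
    finally show "(\<Sum>k\<leftarrow>ks. k\<^sup>2) \<le> n\<^sup>2" .
  qed (use j R E in auto)
  finally have prod_bound: "\<bar>\<Prod>k\<leftarrow>ks. hder01 k g x\<bar> \<le> R ^ n * E ^ n\<^sup>2" .
  have f_j: "\<bar>hder01 j f (g x)\<bar> \<le> M" using f_bound j .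
  have "\<bar>fdb_eval f g x t\<bar> = \<bar>c\<bar> * (\<bar>hder01 j f (g x)\<bar> * \<bar>\<Prod>k\<leftarrow>ks. hder01 k g x\<bar>)"
    by (simp add: t_eq fdb_eval_def abs_mult)
  also have "\<dots> \<le> \<bar>c\<bar> * (M * (R ^ n * E ^ n\<^sup>2))"
    using f_j prod_bound by (intro mult_left_mono mult_mono) auto
  finally show ?thesis by (simp add: t_eq)
qed

definition fdb_weight :: "nat \<Rightarrow> real" where
  "fdb_weight n = (\<Sum>i\<le>n. \<Sum>t\<leftarrow>fdb_terms i. \<bar>fst t\<bar>)"

theorem norm_star_comp_le:
  assumes f: "Cn01 n f" and g: "Cn01 n g" and g_into: "g ` {0..1} \<subseteq> {0..1}"
    and F: "\<forall>x\<in>{0..1}. F x = f (g x)"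
    and f_bound: "\<And>j y. j \<le> n \<Longrightarrow> y \<in> {0..1} \<Longrightarrow> \<bar>hder01 j f y\<bar> \<le> M"
    and g_bound: "\<And>k x. k \<le> n \<Longrightarrow> x \<in> {0..1} \<Longrightarrow> \<bar>hder01 k g x\<bar> \<le> R * E ^ k\<^sup>2"
    and R: "1 \<le> R" and E: "1 \<le> E"
  shows "norm_star n F \<le> fdb_weight n * M * R ^ n * E ^ n\<^sup>2"
proof (rule norm_star_le)
  fix i and x :: real assume i: "i \<le> n" and x: "x \<in> {0..1}"
  define C where "C = M * (R ^ n * E ^ n\<^sup>2)"
  have "0 \<le> M" using f_bound[of 0 0] by force
  then have "0 \<le> C" using R E by (simp add: C_def)
  have gx: "g x \<in> {0..1}" using g_into x by blast
  have "\<bar>hder01 i F x\<bar> = \<bar>\<Sum>t\<leftarrow>fdb_terms i. fdb_eval f g x t\<bar>"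
    using hder01_comp_fdb[OF f g g_into F i x] by simp
  also have "\<dots> \<le> (\<Sum>t\<leftarrow>fdb_terms i. \<bar>fdb_eval f g x t\<bar>)"
    using sum_list_abs[of "map (fdb_eval f g x) (fdb_terms i)"] by (simp add: o_def)
  also have "\<dots> \<le> (\<Sum>t\<leftarrow>fdb_terms i. \<bar>fst t\<bar> * C)"
    unfolding C_def
    by (intro sum_list_mono fdb_eval_bound[OF _ i f_bound[OF _ gx] g_bound[OF _ x] R E])
  also have "\<dots> = (\<Sum>t\<leftarrow>fdb_terms i. \<bar>fst t\<bar>) * C"
    by (simp add: sum_list_mult_const)
  also have "\<dots> \<le> fdb_weight n * C"
    unfolding fdb_weight_def using i \<open>0 \<le> C\<close>
    by (intro mult_right_mono member_le_sum) (auto intro!: sum_list_nonneg)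
  finally show "\<bar>hder01 i F x\<bar> \<le> fdb_weight n * M * R ^ n * E ^ n\<^sup>2"
    by (simp add: C_def mult.assoc)
qed

lemma fdb_weight_nonneg: "0 \<le> fdb_weight n"
  unfolding fdb_weight_def by (auto intro!: sum_nonneg sum_list_nonneg)

lemma diffeo01_mono: "diffeo01 n g \<Longrightarrow> k \<le> n \<Longrightarrow> diffeo01 k g"
  by (auto simp: diffeo01_def Cn01_def)

lemma diffeo01_maps_into:
  assumes "diffeo01 n g"
  shows "g ` {0..1} \<subseteq> {0..1}" "inv_into {0..1} g ` {0..1} \<subseteq> {0..1}"
proof -
  have "bij_betw g {0..1} {0..1}" using assms by (simp add: diffeo01_def)
  then show "g ` {0..1} \<subseteq> {0..1}" "inv_into {0..1} g ` {0..1} \<subseteq> {0..1}"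
    using bij_betw_imp_surj_on bij_betw_inv_into by blast+
qed

lemma inv_into_comp_bij_betw:
  assumes "bij_betw f S S" "bij_betw g S S" "y \<in> S"
  shows "inv_into S (f \<circ> g) y = inv_into S g (inv_into S f y)"
  using assms inv_into_comp[of f g S y] by (simp add: bij_betw_def)

lemma norm_star_comp_diffeo_le:
  assumes f: "diffeo01 n f" and f_norm: "dnorm n f \<le> M" and g: "diffeo01 n g"
    and g_bound: "\<And>k x. k \<le> n \<Longrightarrow> x \<in> {0..1} \<Longrightarrow> \<bar>hder01 k g x\<bar> \<le> H" and H: "1 \<le> H"
  shows "norm_star n (f \<circ> g) \<le> fdb_weight n * M * H ^ n"
proof -
  have "norm_star n (f \<circ> g) \<le> fdb_weight n * M * H ^ n * 1 ^ n\<^sup>2"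
  proof (rule norm_star_comp_le[OF _ _ diffeo01_maps_into(1)[OF g]])
    show "Cn01 n f" "Cn01 n g" using f g by (simp_all add: diffeo01_def)
    show "\<bar>hder01 j f y\<bar> \<le> M" if "j \<le> n" "y \<in> {0..1}" for j y
      using hder01_le_dnorm(1)[OF f that] f_norm by (rule order_trans)
  qed (use g_bound H in simp_all)
  then show ?thesis by simp
qed

lemma norm_star_inv_comp_le:
  assumes f: "diffeo01 n f" and f_norm: "\<And>k. k \<le> n \<Longrightarrow> dnorm k f \<le> R * E ^ k\<^sup>2"
    and R: "1 \<le> R" and E: "1 \<le> E" and g: "diffeo01 n g"
    and g_inv_bound: "\<And>j y. j \<le> n \<Longrightarrow> y \<in> {0..1} \<Longrightarrow> \<bar>hder01 j (inv_into {0..1} g) y\<bar> \<le> K"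
  shows "norm_star n (inv_into {0..1} (f \<circ> g)) \<le> fdb_weight n * K * R ^ n * E ^ n\<^sup>2"
proof (rule norm_star_comp_le[OF _ _ diffeo01_maps_into(2)[OF f] _ g_inv_bound _ R E])
  show "Cn01 n (inv_into {0..1} g)" "Cn01 n (inv_into {0..1} f)"
    using f g by (simp_all add: diffeo01_def)
  have "bij_betw f {0..1} {0..1}" "bij_betw g {0..1} {0..1}"
    using f g by (simp_all add: diffeo01_def)
  then show "\<forall>x\<in>{0..1}. inv_into {0..1} (f \<circ> g) x = inv_into {0..1} g (inv_into {0..1} f x)"
    by (simp add: inv_into_comp_bij_betw)
  show "\<bar>hder01 k (inv_into {0..1} f) x\<bar> \<le> R * E ^ k\<^sup>2" if "k \<le> n" "x \<in> {0..1}" for k x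
    using hder01_le_dnorm(2)[OF diffeo01_mono[OF f that(1)] order_refl that(2)] f_norm[OF that(1)]
    by (rule order_trans)
qed

lemma admissible_delta:
  assumes "admissible s \<delta>"
  shows "0 < \<delta>" "\<delta> \<le> 1"
proof -
  obtain k :: nat where "0 < k" "s = 1 / real k" "0 < \<delta>" "\<delta> < s / 2"
    using assms unfolding admissible_def by blast
  moreover from this have "s \<le> 1" by (simp add: divide_le_eq)
  ultimately show "0 < \<delta>" "\<delta> \<le> 1" by linarith+
qed

theorem lemma3p4:
  fixes \<rho> :: "nat \<Rightarrow> real"
    and A :: "real \<Rightarrow> real \<Rightarrow> real \<Rightarrow> real"
  assumes hA: "\<And>s \<delta>. admissible s \<delta> \<Longrightarrow>
      smooth_diffeo01 (A s \<delta>) \<and>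
      (\<exists>a. smooth_real a \<and> (\<forall>x. a (x + s) = a x) \<and> (\<forall>x. 0 \<le> a x) \<and>
           (\<forall>x\<in>{0..1}. A s \<delta> x = x + a x)) \<and>
      A s \<delta> 0 = 0 \<and> A s \<delta> \<delta> = s - \<delta> \<and> A s \<delta> s = s \<and>
      (\<forall>x\<in>{0..1}. \<delta> / (2 * s) \<le> hder01 1 (A s \<delta>) x \<and> hder01 1 (A s \<delta>) x \<le> 2 * s / \<delta>) \<and>
      (\<forall>n. dnorm n (A s \<delta>) \<le> \<rho> n / \<delta> ^ (n\<^sup>2))"
  shows "\<forall>n h. diffeo01 n h \<longrightarrow>
           (\<exists>c. \<forall>s \<delta>. admissible s \<delta> \<longrightarrow> dnorm n (A s \<delta> \<circ> h) \<le> c / \<delta> ^ (n\<^sup>2))"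
proof (intro allI impI)
  fix n h assume h: "diffeo01 n h"
  then have "Cn01 n h" "Cn01 n (inv_into {0..1} h)" by (simp_all add: diffeo01_def)
  then obtain H K where
    H: "\<And>k x. k \<le> n \<Longrightarrow> x \<in> {0..1} \<Longrightarrow> \<bar>hder01 k h x\<bar> \<le> H" and
    K: "\<And>j y. j \<le> n \<Longrightarrow> y \<in> {0..1} \<Longrightarrow> \<bar>hder01 j (inv_into {0..1} h) y\<bar> \<le> K"
    by (meson Cn01_bounded)
  define R where "R = max 1 (Max (\<rho> ` {..n}))"
  have \<rho>_le_R: "\<rho> k \<le> R" if "k \<le> n" for k
    unfolding R_def using that by (intro max.coboundedI2 Max_ge) auto
  show "\<exists>c. \<forall>s \<delta>. admissible s \<delta> \<longrightarrow> dnorm n (A s \<delta> \<circ> h) \<le> c / \<delta> ^ n\<^sup>2"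
  proof (intro exI allI impI)
    fix s \<delta> assume adm: "admissible s \<delta>"
    have "smooth_diffeo01 (A s \<delta>)" and A_norm: "dnorm k (A s \<delta>) \<le> \<rho> k / \<delta> ^ k\<^sup>2" for k
      using hA[OF adm] by blast+
    then have A: "diffeo01 n (A s \<delta>)" by (simp add: smooth_diffeo01_def)
    have \<delta>: "0 < \<delta>" "\<delta> \<le> 1" using admissible_delta[OF adm] .
    have "norm_star n (A s \<delta> \<circ> h) \<le> fdb_weight n * (\<rho> n / \<delta> ^ n\<^sup>2) * max 1 H ^ n"
      using H by (intro norm_star_comp_diffeo_le[OF A A_norm h]) (auto simp: le_max_iff_disj)
    moreover have "norm_star n (inv_into {0..1} (A s \<delta> \<circ> h)) \<le> fdb_weight n * K * R ^ n * (1 / \<delta>) ^ n\<^sup>2"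
    proof (rule norm_star_inv_comp_le[OF A _ _ _ h K])
      show "dnorm k (A s \<delta>) \<le> R * (1 / \<delta>) ^ k\<^sup>2" if "k \<le> n" for k
      proof -
        have "\<rho> k / \<delta> ^ k\<^sup>2 \<le> R / \<delta> ^ k\<^sup>2" using \<rho>_le_R[OF that] \<delta>(1) by (simp add: divide_right_mono)
        with A_norm[of k] show ?thesis by (simp add: power_one_over)
      qed
      show "1 \<le> R" "1 \<le> 1 / \<delta>" using \<delta> by (simp_all add: R_def)
    qed
    moreover have "fdb_weight n * (\<rho> n * max 1 H ^ n) \<le> fdb_weight n * max (\<rho> n * max 1 H ^ n) (K * R ^ n)"
      and "fdb_weight n * (K * R ^ n) \<le> fdb_weight n * max (\<rho> n * max 1 H ^ n) (K * R ^ n)"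
      by (simp_all add: mult_left_mono fdb_weight_nonneg)
    ultimately show "dnorm n (A s \<delta> \<circ> h)
        \<le> fdb_weight n * max (\<rho> n * max 1 H ^ n) (K * R ^ n) / \<delta> ^ n\<^sup>2"
      unfolding dnorm_def using \<delta>
      by (auto simp: power_one_over mult.assoc elim!: order_trans intro!: divide_right_mono)
  qed
qed

end
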